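(* Let $p$ be a prime, $n\ge1$, and let $1\to T^n\to G\xrightarrow{\pi} C_p\to 1$ be an extension of compact Lie groups. Then there exist a closed normal subgroup $N$ of $G$ and an integer $l$ with $1\le l\le n$ such that $G/N$ is a split extension of an $l$-torus by $C_p$, i.e. there is a split short exact sequence $1\to T^l\to G/N\to C_p\to 1$. *)

theory Defs
  imports "HOL-Analysis.Analysis" "HOL-Algebra.Coset" "HOL-Algebra.Elementary_Groups"
begin

definition topological_group :: "('g, 'm) monoid_scheme \<Rightarrow> 'g topology \<Rightarrow> bool" where
  "topological_group G X \<longleftrightarrow> group G \<and> topspace X = carrier G
     \<and> continuous_map (prod_topology X X) X (\<lambda>(x, y). monoid.mult G x y)
     \<and> continuous_map X X (\<lambda>x. m_inv G x)"

text \<open>The l-torus T^l = (S^1)^l, realised as functions nat => complex whose first l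
  coordinates lie on the unit circle and whose other coordinates are 1;
  pointwise multiplication.\<close>
definition torus_group :: "nat \<Rightarrow> (nat \<Rightarrow> complex) monoid" where
  "torus_group l = \<lparr>carrier = {z. (\<forall>i<l. norm (z i) = 1) \<and> (\<forall>i\<ge>l. z i = 1)},
                     monoid.mult = (\<lambda>z w i. z i * w i), one = (\<lambda>i. 1)\<rparr>"

definition torus_topology :: "nat \<Rightarrow> (nat \<Rightarrow> complex) topology" where
  "torus_topology l =
     subtopology (product_topology (\<lambda>_. euclidean) UNIV) (carrier (torus_group l))"

abbreviation cyclic_group :: "nat \<Rightarrow> int monoid" where
  "cyclic_group p \<equiv> integer_mod_group p"

definition cyclic_topology :: "nat \<Rightarrow> int topology" where
  "cyclic_topology p = discrete_topology (carrier (cyclic_group p))"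

definition quotient_topology :: "'a topology \<Rightarrow> ('a \<Rightarrow> 'b) \<Rightarrow> 'b topology" where
  "quotient_topology X f =
     topology (\<lambda>U. U \<subseteq> f ` topspace X \<and> openin X {x \<in> topspace X. f x \<in> U})"

definition quotient_group_topology ::
  "('g, 'm) monoid_scheme \<Rightarrow> 'g topology \<Rightarrow> 'g set \<Rightarrow> 'g set topology" where
  "quotient_group_topology G X N = quotient_topology X (\<lambda>x. r_coset G N x)"

definition torus_extension ::
  "('h, 'm) monoid_scheme \<Rightarrow> 'h topology \<Rightarrow> nat \<Rightarrow> nat
     \<Rightarrow> ((nat \<Rightarrow> complex) \<Rightarrow> 'h) \<Rightarrow> ('h \<Rightarrow> int) \<Rightarrow> bool" where
  "torus_extension H Y l p \<iota> \<pi> \<longleftrightarrow>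
     \<iota> \<in> hom (torus_group l) H \<and> inj_on \<iota> (carrier (torus_group l))
     \<and> continuous_map (torus_topology l) Y \<iota>
     \<and> \<pi> \<in> hom H (cyclic_group p) \<and> \<pi> ` carrier H = carrier (cyclic_group p)
     \<and> continuous_map Y (cyclic_topology p) \<pi>
     \<and> kernel H (cyclic_group p) \<pi> = \<iota> ` carrier (torus_group l)"

definition split_torus_extension ::
  "('h, 'm) monoid_scheme \<Rightarrow> 'h topology \<Rightarrow> nat \<Rightarrow> nat \<Rightarrow> bool" where
  "split_torus_extension H Y l p \<longleftrightarrow>
     (\<exists>\<iota> \<pi> s. torus_extension H Y l p \<iota> \<pi>
        \<and> s \<in> hom (cyclic_group p) H \<and> continuous_map (cyclic_topology p) Y s
        \<and> (\<forall>c \<in> carrier (cyclic_group p). \<pi> (s c) = c))"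

end

theory Submission
  imports Defs
begin

text \<open>Let \<open>K = \<iota>(T\<^sup>n)\<close> and let \<open>N\<close> be its \<open>p\<close>-torsion, a closed normal subgroup of \<open>G\<close>.
  Since \<open>z \<mapsto> z\<^sup>p\<close> is a surjection of \<open>T\<^sup>n\<close> onto itself with kernel the \<open>p\<close>-torsion,
  \<open>K/N \<cong> T\<^sup>n\<close>, so \<open>G/N\<close> is again an extension of \<open>T\<^sup>n\<close> by \<open>C\<^sub>p\<close> (and \<open>l = n\<close>).
  It splits: pick \<open>g\<close> with \<open>\<pi> g = 1\<close>, so \<open>t = g\<^sup>p \<in> K\<close>, and a \<open>p\<close>-th root \<open>r \<in> K\<close> of \<open>t\<inverse>\<close>.
  For \<open>h = r g\<close> we get \<open>h\<^sup>p = N\<^sub>g(r) t \<in> K\<close> with \<open>N\<^sub>g(r) = r (g r g\<inverse>) \<cdots> (g\<^sup>p\<^sup>-\<^sup>1 r g\<^sup>1\<^sup>-\<^sup>p)\<close>,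
  and since \<open>K\<close> is abelian and \<open>g\<close> commutes with \<open>t\<close>,
  \<open>(h\<^sup>p)\<^sup>p = N\<^sub>g(r\<^sup>p) t\<^sup>p = N\<^sub>g(t\<inverse>) t\<^sup>p = t\<^sup>-\<^sup>p t\<^sup>p = 1\<close>. Hence \<open>h\<^sup>p \<in> N\<close>, and \<open>c \<mapsto> (N h)\<^sup>c\<close> is a
  continuous section of \<open>G/N \<rightarrow> C\<^sub>p\<close>.\<close>

lemma carrier_torus_group:
  "carrier (torus_group n) = {z. (\<forall>i<n. norm (z i) = 1) \<and> (\<forall>i\<ge>n. z i = 1)}"
  by (simp add: torus_group_def)

lemma mult_torus_group: "monoid.mult (torus_group n) = (\<lambda>z w i. z i * w i)"
  by (simp add: torus_group_def)

lemma one_torus_group: "\<one>\<^bsub>torus_group n\<^esub> = (\<lambda>i. 1)"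
  by (simp add: torus_group_def)

lemma comm_group_torus_group: "comm_group (torus_group n)"
proof (rule comm_groupI)
  fix z assume z: "z \<in> carrier (torus_group n)"
  then have "z i \<noteq> 0" for i
    by (cases "i < n") (auto simp: carrier_torus_group)
  then have "(\<lambda>i. inverse (z i)) \<otimes>\<^bsub>torus_group n\<^esub> z = \<one>\<^bsub>torus_group n\<^esub>"
    by (simp add: mult_torus_group one_torus_group)
  moreover have "(\<lambda>i. inverse (z i)) \<in> carrier (torus_group n)"
    using z by (simp add: carrier_torus_group norm_inverse)
  ultimately show "\<exists>y \<in> carrier (torus_group n). y \<otimes>\<^bsub>torus_group n\<^esub> z = \<one>\<^bsub>torus_group n\<^esub>"
    by blast
qed (auto simp: carrier_torus_group mult_torus_group one_torus_group norm_mult mult.commute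
                mult.assoc)

lemma pow_torus_group: "z [^]\<^bsub>torus_group n\<^esub> (k::nat) = (\<lambda>i. z i ^ k)"
  by (induction k) (simp_all add: mult_torus_group one_torus_group mult.commute)

lemma torus_pow_closed:
  "w \<in> carrier (torus_group n) \<Longrightarrow> (\<lambda>i. w i ^ m) \<in> carrier (torus_group n)"
  by (simp add: carrier_torus_group norm_power)

lemma torus_pow_surjective:
  assumes "m > 0" and z: "z \<in> carrier (torus_group n)"
  obtains w where "w \<in> carrier (torus_group n)" "z = (\<lambda>i. w i ^ m)"
proof -
  have "\<forall>i. \<exists>r. r ^ m = z i"
  proof
    fix i
    obtain r where "z i = r ^ m"
      using \<open>m > 0\<close> by (metis exists_complex_root not_gr0)
    then show "\<exists>r. r ^ m = z i"
      by auto
  qed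
  then obtain r where r: "\<And>i. r i ^ m = z i"
    by metis
  define w where "w i = (if i < n then r i else 1)" for i
  have "norm (r i) = 1" if "i < n" for i
  proof -
    have "norm (r i) ^ m = 1"
      using r[of i] z that by (simp add: carrier_torus_group flip: norm_power)
    then show ?thesis
      using \<open>m > 0\<close> by (metis norm_ge_zero power_one zero_le_one power_eq_iff_eq_base)
  qed
  then have "w \<in> carrier (torus_group n)"
    by (simp add: w_def carrier_torus_group)
  moreover have "z = (\<lambda>i. w i ^ m)"
    using r z by (auto simp: w_def carrier_torus_group)
  ultimately show thesis by (rule that)
qed

lemma topspace_torus_topology [simp]:
  "topspace (torus_topology n) = carrier (torus_group n)"
  by (simp add: torus_topology_def)

lemma compact_space_torus_topology: "compact_space (torus_topology n)"
proof -
  have "carrier (torus_group n) = PiE UNIV (\<lambda>i. if i < n then sphere 0 1 else {1})"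
    by (auto simp: carrier_torus_group PiE_iff split: if_splits)
  then show ?thesis
    unfolding torus_topology_def
    by (simp only:) (rule compact_space_subtopology, auto simp: compactin_PiE)
qed

lemma Hausdorff_space_torus_topology: "Hausdorff_space (torus_topology n)"
  unfolding torus_topology_def
  by (simp add: Hausdorff_space_subtopology Hausdorff_space_product_topology)

lemma torus_pow_image:
  assumes "m > 0"
  shows "(\<lambda>w i. w i ^ m) ` carrier (torus_group n) = carrier (torus_group n)"
proof
  show "(\<lambda>w i. w i ^ m) ` carrier (torus_group n) \<subseteq> carrier (torus_group n)"
    using torus_pow_closed by blast
  show "carrier (torus_group n) \<subseteq> (\<lambda>w i. w i ^ m) ` carrier (torus_group n)"
  proof
    fix z assume "z \<in> carrier (torus_group n)"
    then obtain w where "w \<in> carrier (torus_group n)" "z = (\<lambda>i. w i ^ m)"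
      by (rule torus_pow_surjective [OF assms])
    then show "z \<in> (\<lambda>w i. w i ^ m) ` carrier (torus_group n)"
      by auto
  qed
qed

lemma continuous_map_torus_pow:
  "continuous_map (torus_topology n) (torus_topology n) (\<lambda>w i. w i ^ m)"
proof -
  have "continuous_map (torus_topology n) euclidean (\<lambda>w. w i ^ m)" for i
  proof -
    have "continuous_map (torus_topology n) euclidean (\<lambda>w. w i)"
      unfolding torus_topology_def
      by (intro continuous_map_from_subtopology continuous_map_product_projection) simp
    moreover have "continuous_map euclidean euclidean (\<lambda>z::complex. z ^ m)"
      by (simp add: continuous_intros)
    ultimately have "continuous_map (torus_topology n) euclidean ((\<lambda>z. z ^ m) \<circ> (\<lambda>w. w i))"
      by (rule continuous_map_compose)
    then show ?thesis
      by (simp add: o_def)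
  qed
  then have "continuous_map (torus_topology n) (product_topology (\<lambda>_. euclidean) UNIV)
      (\<lambda>w i. w i ^ m)"
    by (simp add: continuous_map_componentwise_UNIV)
  moreover have "(\<lambda>w i. w i ^ m) ` topspace (torus_topology n) \<subseteq> carrier (torus_group n)"
    using torus_pow_closed by auto
  ultimately have "continuous_map (torus_topology n)
      (subtopology (product_topology (\<lambda>_. euclidean) UNIV) (carrier (torus_group n)))
      (\<lambda>w i. w i ^ m)"
    using continuous_map_in_subtopology by blast
  then show ?thesis
    unfolding torus_topology_def [of n, symmetric] .
qed

lemma quotient_map_torus_pow:
  "m > 0 \<Longrightarrow> quotient_map (torus_topology n) (torus_topology n) (\<lambda>w i. w i ^ m)"
  by (rule continuous_imp_quotient_map)
     (simp_all add: continuous_map_torus_pow compact_space_torus_topology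
                    Hausdorff_space_torus_topology torus_pow_image)

lemma openin_quotient_topology:
  "openin (quotient_topology X f) U \<longleftrightarrow>
     U \<subseteq> f ` topspace X \<and> openin X {x \<in> topspace X. f x \<in> U}"
proof -
  have "istopology (\<lambda>U. U \<subseteq> f ` topspace X \<and> openin X {x \<in> topspace X. f x \<in> U})"
  proof -
    have "{x \<in> topspace X. f x \<in> S \<inter> T} = {x \<in> topspace X. f x \<in> S} \<inter> {x \<in> topspace X. f x \<in> T}"
      for S T by blast
    moreover have "{x \<in> topspace X. f x \<in> \<Union>\<U>} = (\<Union>U\<in>\<U>. {x \<in> topspace X. f x \<in> U})"
      for \<U> by blast
    ultimately show ?thesis
      unfolding istopology_def by (auto intro: openin_Int openin_Union)
  qed
  then show ?thesis
    by (simp add: quotient_topology_def)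
qed

lemma quotient_map_quotient_topology:
  "quotient_map X (quotient_topology X f) f"
proof -
  have "{x \<in> topspace X. f x \<in> f ` topspace X} = topspace X"
    by blast
  then have "openin (quotient_topology X f) (f ` topspace X)"
    by (simp add: openin_quotient_topology)
  then have "topspace (quotient_topology X f) = f ` topspace X"
    using openin_subset openin_quotient_topology[of X f "topspace (quotient_topology X f)"]
    by blast
  then show ?thesis
    by (auto simp: quotient_map_def openin_quotient_topology)
qed

lemma continuous_map_topological_group_pow:
  assumes "topological_group G X"
  shows "continuous_map X X (\<lambda>x. x [^]\<^bsub>G\<^esub> (k::nat))"
proof (induction k)
  case 0
  then show ?case
    using assms by (simp add: topological_group_def monoid.one_closed group.is_monoid)
next
  case (Suc k)
  have "continuous_map X (prod_topology X X) (\<lambda>x. (x [^]\<^bsub>G\<^esub> k, x))"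
    using Suc by (simp add: continuous_map_pairedI)
  moreover have "continuous_map (prod_topology X X) X (\<lambda>(x, y). x \<otimes>\<^bsub>G\<^esub> y)"
    using assms by (simp add: topological_group_def)
  ultimately have "continuous_map X X ((\<lambda>(x, y). x \<otimes>\<^bsub>G\<^esub> y) \<circ> (\<lambda>x. (x [^]\<^bsub>G\<^esub> k, x)))"
    by (rule continuous_map_compose)
  then show ?case
    by (simp add: o_def)
qed

lemma (in group) pow_hom_integer_mod_group:
  assumes "m > 0" and a: "a \<in> carrier G" "a [^] m = \<one>"
  shows "(\<lambda>c. a [^] nat c) \<in> hom (integer_mod_group m) G"
proof (rule homI)
  have pow_mod: "a [^] k = a [^] (k mod m)" for k
  proof -
    have "a [^] k = (a [^] m) [^] (k div m) \<otimes> a [^] (k mod m)"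
      by (metis a(1) nat_pow_mult nat_pow_pow mod_mult_div_eq add.commute)
    then show ?thesis
      using a by simp
  qed
  fix x y assume "x \<in> carrier (integer_mod_group m)" "y \<in> carrier (integer_mod_group m)"
  then have "x \<ge> 0" "y \<ge> 0"
    using \<open>m > 0\<close> by (auto simp: carrier_integer_mod_group)
  then have "nat ((x + y) mod int m) = (nat x + nat y) mod m"
    by (simp add: nat_mod_distrib nat_add_distrib)
  then show "a [^] nat (x \<otimes>\<^bsub>integer_mod_group m\<^esub> y) = a [^] nat x \<otimes> a [^] nat y"
    using a by (simp add: pow_mod[of "nat x + nat y", symmetric] nat_pow_mult)
qed (use a in simp)

primrec conj_orbit_prod :: "('g, 'm) monoid_scheme \<Rightarrow> 'g \<Rightarrow> nat \<Rightarrow> 'g \<Rightarrow> 'g" where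
  "conj_orbit_prod G g 0 x = \<one>\<^bsub>G\<^esub>"
| "conj_orbit_prod G g (Suc k) x =
     x \<otimes>\<^bsub>G\<^esub> (g \<otimes>\<^bsub>G\<^esub> conj_orbit_prod G g k x \<otimes>\<^bsub>G\<^esub> inv\<^bsub>G\<^esub> g)"

context group
begin

lemma inv_mult_cancel_left [simp]:
  "x \<in> carrier G \<Longrightarrow> y \<in> carrier G \<Longrightarrow> inv x \<otimes> (x \<otimes> y) = y"
  by (simp add: m_assoc [symmetric])

lemma conj_orbit_prod_closed [simp]:
  "g \<in> carrier G \<Longrightarrow> x \<in> carrier G \<Longrightarrow> conj_orbit_prod G g k x \<in> carrier G"
  by (induction k) auto

lemma pow_mult_conj_orbit_prod:
  assumes "g \<in> carrier G" "x \<in> carrier G"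
  shows "(x \<otimes> g) [^] k = conj_orbit_prod G g k x \<otimes> g [^] k"
proof (induction k)
  case (Suc k)
  have "(x \<otimes> g) [^] Suc k = (x \<otimes> g) \<otimes> (conj_orbit_prod G g k x \<otimes> g [^] k)"
    using assms by (simp only: Suc nat_pow_Suc2 m_closed)
  also have "\<dots> = conj_orbit_prod G g (Suc k) x \<otimes> (g \<otimes> g [^] k)"
    using assms by (simp add: m_assoc)
  finally show ?case
    unfolding nat_pow_Suc2[OF assms(1)] .
qed simp

lemma conj_orbit_prod_commuting:
  assumes "g \<in> carrier G" "x \<in> carrier G" "g \<otimes> x = x \<otimes> g"
  shows "conj_orbit_prod G g k x = x [^] k"
proof (induction k)
  case (Suc k)
  have "g \<otimes> x [^] k = x [^] k \<otimes> g"
    using group_commutes_pow[of x g k] assms by simp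
  then have "g \<otimes> x [^] k \<otimes> inv g = x [^] k"
    using assms by (simp add: m_assoc)
  then have "conj_orbit_prod G g (Suc k) x = x \<otimes> x [^] k"
    using Suc by simp
  then show ?case
    unfolding nat_pow_Suc2[OF assms(2)] .
qed simp

end

definition torsion_part :: "('g, 'm) monoid_scheme \<Rightarrow> 'g set \<Rightarrow> nat \<Rightarrow> 'g set" where
  "torsion_part G H m = {x \<in> H. x [^]\<^bsub>G\<^esub> m = \<one>\<^bsub>G\<^esub>}"

locale abelian_normal = normal +
  assumes commute: "x \<in> H \<Longrightarrow> y \<in> H \<Longrightarrow> x \<otimes> y = y \<otimes> x"
begin

lemma pow_mult_distrib_mem: "x \<in> H \<Longrightarrow> y \<in> H \<Longrightarrow> (x \<otimes> y) [^] (k::nat) = x [^] k \<otimes> y [^] k"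
  by (simp add: commute pow_mult_distrib)

lemma nat_pow_mem: "x \<in> H \<Longrightarrow> x [^] (k::nat) \<in> H"
  by (induction k) auto

lemma conj_mem: "g \<in> carrier G \<Longrightarrow> x \<in> H \<Longrightarrow> g \<otimes> x \<otimes> inv g \<in> H"
  using inv_op_closed2 by blast

lemma conj_orbit_prod_mem:
  "g \<in> carrier G \<Longrightarrow> x \<in> H \<Longrightarrow> conj_orbit_prod G g k x \<in> H"
  by (induction k) (auto intro: conj_mem)

lemma conj_orbit_prod_mult:
  assumes g: "g \<in> carrier G" and "x \<in> H" "y \<in> H"
  shows "conj_orbit_prod G g k (x \<otimes> y) = conj_orbit_prod G g k x \<otimes> conj_orbit_prod G g k y"
proof (induction k)
  case (Suc k)
  define cx cy
    where "cx = g \<otimes> conj_orbit_prod G g k x \<otimes> inv g"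
      and "cy = g \<otimes> conj_orbit_prod G g k y \<otimes> inv g"
  have c: "cx \<in> H" "cy \<in> H"
    using assms by (auto simp: cx_def cy_def intro: conj_mem conj_orbit_prod_mem)
  have "conj_orbit_prod G g (Suc k) (x \<otimes> y) = x \<otimes> y \<otimes> (cx \<otimes> cy)"
    using Suc assms by (simp add: cx_def cy_def m_assoc conj_orbit_prod_mem)
  also have "\<dots> = x \<otimes> cx \<otimes> (y \<otimes> cy)"
  proof -
    have "y \<otimes> (cx \<otimes> cy) = cx \<otimes> (y \<otimes> cy)"
      using assms c by (simp add: commute[of y cx] m_assoc [symmetric])
    then show ?thesis
      using assms c by (simp add: m_assoc)
  qed
  also have "\<dots> = conj_orbit_prod G g (Suc k) x \<otimes> conj_orbit_prod G g (Suc k) y"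
    by (simp add: cx_def cy_def)
  finally show ?case .
qed simp

lemma conj_orbit_prod_pow:
  assumes "g \<in> carrier G" "x \<in> H"
  shows "conj_orbit_prod G g k (x [^] (j::nat)) = conj_orbit_prod G g k x [^] j"
proof (induction j)
  case 0
  have "conj_orbit_prod G g k \<one> = \<one>"
    using assms by (induction k) auto
  then show ?case by simp
next
  case (Suc j)
  then show ?case
    using assms by (simp add: conj_orbit_prod_mult nat_pow_mem)
qed

lemma exists_torsion_power_in_coset:
  assumes g: "g \<in> carrier G" "g [^] m \<in> H"
    and roots: "\<And>t. t \<in> H \<Longrightarrow> \<exists>r\<in>H. r [^] m = t"
  obtains r where "r \<in> H" "(r \<otimes> g) [^] m \<in> torsion_part G H m"
proof -
  define t where "t = g [^] m"
  have t: "t \<in> H" "t \<in> carrier G"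
    using g by (auto simp: t_def)
  obtain r where r: "r \<in> H" "r [^] m = inv t"
    using roots[of "inv t"] t by auto
  define N where "N = conj_orbit_prod G g m r"
  have N: "N \<in> H" "N \<in> carrier G"
    using g r by (auto simp: N_def conj_orbit_prod_mem)
  have rg: "(r \<otimes> g) [^] m = N \<otimes> t"
    using g r by (simp add: N_def t_def pow_mult_conj_orbit_prod)
  have "g \<otimes> inv t = inv t \<otimes> g"
    using g by (simp add: t_def group_commutes_pow flip: nat_pow_inv)
  then have "N [^] m = inv t [^] m"
    using g t r by (simp add: N_def flip: conj_orbit_prod_pow conj_orbit_prod_commuting)
  then have "((r \<otimes> g) [^] m) [^] m = \<one>"
    using N t by (simp add: rg pow_mult_distrib_mem nat_pow_inv)
  moreover have "(r \<otimes> g) [^] m \<in> H"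
    using N t by (simp add: rg)
  ultimately show thesis
    using that r by (simp add: torsion_part_def)
qed

lemma torsion_part_normal: "torsion_part G H m \<lhd> G"
proof (rule normal_invI)
  show "subgroup (torsion_part G H m) G"
  proof (rule subgroupI)
    fix x y assume "x \<in> torsion_part G H m" "y \<in> torsion_part G H m"
    then show "inv x \<in> torsion_part G H m" "x \<otimes> y \<in> torsion_part G H m"
      by (auto simp: torsion_part_def pow_mult_distrib_mem nat_pow_inv)
  next
    show "torsion_part G H m \<subseteq> carrier G"
      by (auto simp: torsion_part_def)
    have "\<one> \<in> torsion_part G H m"
      by (simp add: torsion_part_def)
    then show "torsion_part G H m \<noteq> {}"
      by blast
  qed
  fix x h assume "x \<in> carrier G" "h \<in> torsion_part G H m"
  moreover have "(x \<otimes> h \<otimes> inv x) [^] k = x \<otimes> h [^] k \<otimes> inv x" if "x \<in> carrier G" "h \<in> carrier G"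
    for x h and k :: nat
    using that by (induction k) (simp_all add: m_assoc)
  ultimately show "x \<otimes> h \<otimes> inv x \<in> torsion_part G H m"
    by (auto simp: torsion_part_def conj_mem)
qed

lemma rcos_torsion_part_eq_iff:
  assumes "a \<in> H" "b \<in> H"
  shows "torsion_part G H m #> a = torsion_part G H m #> b \<longleftrightarrow> a [^] m = b [^] m"
proof -
  interpret N: normal "torsion_part G H m" G
    by (rule torsion_part_normal)
  have ab: "a \<in> carrier G" "b \<in> carrier G"
    using assms by auto
  have "torsion_part G H m #> a = torsion_part G H m #> b \<longleftrightarrow> a \<otimes> inv b \<in> torsion_part G H m"
    using ab by (metis N.rcos_module N.subgroup_axioms is_group repr_independence rcos_self)
  also have "\<dots> \<longleftrightarrow> a [^] m \<otimes> inv (b [^] m) = \<one>"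
    using assms by (simp add: torsion_part_def pow_mult_distrib_mem nat_pow_inv)
  also have "\<dots> \<longleftrightarrow> a [^] m = b [^] m"
    using ab by (simp add: inv_solve_right')
  finally show ?thesis .
qed

end

locale torus_extension_setting =
  fixes G :: "('g, 'm) monoid_scheme" (structure) and X :: "'g topology"
    and p n :: nat and \<iota> :: "(nat \<Rightarrow> complex) \<Rightarrow> 'g" and \<pi> :: "'g \<Rightarrow> int"
  assumes prime: "prime p"
    and topological_group: "topological_group G X"
    and Hausdorff: "Hausdorff_space X"
    and extension: "torus_extension G X n p \<iota> \<pi>"
begin

abbreviation "T \<equiv> carrier (torus_group n)"
abbreviation "N \<equiv> torsion_part G (\<iota> ` T) p"

lemma p_gt_1: "p > 1"
  using prime prime_gt_1_nat by blast

lemma p_pos: "p > 0"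
  using p_gt_1 by simp

lemma topspace_X: "topspace X = carrier G"
  using topological_group by (simp add: topological_group_def)

sublocale group G
  using topological_group by (simp add: topological_group_def)

lemma iota_hom: "\<iota> \<in> hom (torus_group n) G"
  and iota_inj: "inj_on \<iota> T"
  and iota_continuous: "continuous_map (torus_topology n) X \<iota>"
  and pi_hom: "\<pi> \<in> hom G (integer_mod_group p)"
  and pi_surjective: "\<pi> ` carrier G = carrier (integer_mod_group p)"
  and pi_continuous: "continuous_map X (cyclic_topology p) \<pi>"
  and kernel_pi: "kernel G (integer_mod_group p) \<pi> = \<iota> ` T"
  using extension [unfolded torus_extension_def] by blast+

sublocale iota: group_hom "torus_group n" G \<iota>
proof -
  have "group (torus_group n)"
    using comm_group_torus_group by (simp add: comm_group_def)
  with iota_hom show "group_hom (torus_group n) G \<iota>"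
    by (simp add: group_hom_def group_hom_axioms_def is_group)
qed

sublocale pi: group_hom G "integer_mod_group p" \<pi>
  using pi_hom by (simp add: group_hom_def group_hom_axioms_def is_group)

lemma mem_image_iota_iff: "x \<in> \<iota> ` T \<longleftrightarrow> x \<in> carrier G \<and> \<pi> x = 0"
  unfolding kernel_pi [symmetric] kernel_def by simp

lemma pi_image_iota_eq_0: "x \<in> \<iota> ` T \<Longrightarrow> \<pi> x = 0"
  by (simp only: mem_image_iota_iff)

lemma abelian_normal_image_iota: "abelian_normal (\<iota> ` T) G"
proof -
  have "x \<otimes> y = y \<otimes> x" if x: "x \<in> \<iota> ` T" and y: "y \<in> \<iota> ` T" for x y
  proof -
    obtain z where z: "x = \<iota> z" "z \<in> T"
      using x by (rule imageE)
    obtain w where w: "y = \<iota> w" "w \<in> T"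
      using y by (rule imageE)
    have "x \<otimes> y = \<iota> (z \<otimes>\<^bsub>torus_group n\<^esub> w)"
      using z w by simp
    also have "\<dots> = \<iota> (w \<otimes>\<^bsub>torus_group n\<^esub> z)"
      by (simp add: mult_torus_group mult.commute)
    finally show ?thesis
      using z w by simp
  qed
  moreover have "\<iota> ` T \<lhd> G"
    using pi.normal_kernel by (simp add: kernel_pi)
  ultimately show "abelian_normal (\<iota> ` T) G"
    by (simp add: abelian_normal_def abelian_normal_axioms_def)
qed

lemma iota_pow: "z \<in> T \<Longrightarrow> \<iota> z [^] (k::nat) = \<iota> (\<lambda>i. z i ^ k)"
  by (simp flip: iota.hom_nat_pow add: pow_torus_group)

lemma rcos_iota_eq_iff:
  assumes "z \<in> T" "w \<in> T"
  shows "N #> \<iota> z = N #> \<iota> w \<longleftrightarrow> (\<lambda>i. z i ^ p) = (\<lambda>i. w i ^ p)"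
  using assms torus_pow_closed iota_inj
  by (simp add: abelian_normal.rcos_torsion_part_eq_iff [OF abelian_normal_image_iota] iota_pow
                inj_on_eq_iff)

lemma N_closed: "closedin X N"
proof -
  have "closedin X {x \<in> topspace X. \<pi> x \<in> {0}}"
    using pi_continuous
    by (intro closedin_continuous_map_preimage) (auto simp: cyclic_topology_def)
  moreover have "closedin X {x \<in> topspace X. x [^] p \<in> {\<one>}}"
  proof (rule closedin_continuous_map_preimage)
    show "continuous_map X X (\<lambda>x. x [^] p)"
      using topological_group by (rule continuous_map_topological_group_pow)
    show "closedin X {\<one>}"
      using Hausdorff topspace_X by (simp add: closedin_t1_singleton Hausdorff_imp_t1_space)
  qed
  moreover have "N = {x \<in> topspace X. \<pi> x \<in> {0}} \<inter> {x \<in> topspace X. x [^] p \<in> {\<one>}}"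
    unfolding torsion_part_def mem_image_iota_iff topspace_X by auto
  ultimately show ?thesis
    by auto
qed

lemma exists_splitting_element:
  obtains h where "h \<in> carrier G" "\<pi> h = 1" "h [^] p \<in> N"
proof -
  have "1 \<in> \<pi> ` carrier G"
    using pi_surjective p_gt_1 by simp
  then obtain g where g: "g \<in> carrier G" "\<pi> g = 1"
    by auto
  have "\<pi> (g [^] p) = 0"
    using g by (simp add: pi.hom_nat_pow)
  then have "g [^] p \<in> \<iota> ` T"
    using g(1) by (simp only: mem_image_iota_iff nat_pow_closed)
  moreover have "\<exists>r \<in> \<iota> ` T. r [^] p = t" if t: "t \<in> \<iota> ` T" for t
  proof -
    obtain z where z: "t = \<iota> z" "z \<in> T"
      using t by (rule imageE)
    obtain w where w: "w \<in> T" "z = (\<lambda>i. w i ^ p)"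
      using z(2) by (rule torus_pow_surjective [OF p_pos])
    then have "\<iota> w [^] p = t"
      using z by (simp add: iota_pow)
    moreover have "\<iota> w \<in> \<iota> ` T"
      using w(1) by (rule imageI)
    ultimately show ?thesis
      by (rule bexI)
  qed
  ultimately obtain r where r: "r \<in> \<iota> ` T" "(r \<otimes> g) [^] p \<in> N"
    by (rule abelian_normal.exists_torsion_power_in_coset [OF abelian_normal_image_iota g(1)])
  have "r \<in> carrier G" "\<pi> r = 0"
    using r(1) by (simp_all only: mem_image_iota_iff)
  then have "r \<otimes> g \<in> carrier G" "\<pi> (r \<otimes> g) = 1"
    using g p_gt_1 by simp_all
  then show thesis
    using r(2) by (rule that)
qed

lemma N_normal: "N \<lhd> G"
  using abelian_normal_image_iota by (rule abelian_normal.torsion_part_normal)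

lemma N_subgroup: "subgroup N G"
  using N_normal by (rule normal_imp_subgroup)

lemma group_quotient: "group (G Mod N)"
  using N_normal by (rule normal.factorgroup_is_group)

text \<open>\<open>quotient_inclusion\<close> sends \<open>z\<close> to \<open>N \<iota>(z\<^sup>1\<^sup>/\<^sup>p)\<close>; by \<open>rcos_iota_eq_iff\<close> the coset does not
  depend on the chosen \<open>p\<close>-th root. It identifies \<open>T\<^sup>n\<close> with \<open>\<iota>(T\<^sup>n)/N\<close>.\<close>
definition quotient_inclusion :: "(nat \<Rightarrow> complex) \<Rightarrow> 'g set" where
  "quotient_inclusion z = N #> \<iota> (SOME w. w \<in> T \<and> (\<lambda>i. w i ^ p) = z)"

definition quotient_projection :: "'g set \<Rightarrow> int" where
  "quotient_projection S = the_elem (\<pi> ` S)"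

abbreviation "Q \<equiv> quotient_group_topology G X N"

lemma quotient_map_Q: "quotient_map X Q (\<lambda>x. N #> x)"
  by (simp add: quotient_group_topology_def quotient_map_quotient_topology)

lemma topspace_Q: "topspace Q = carrier (G Mod N)"
  using quotient_imp_surjective_map [OF quotient_map_Q] by (simp add: carrier_FactGroup topspace_X)

lemma quotient_inclusion_pow:
  assumes "w \<in> T"
  shows "quotient_inclusion (\<lambda>i. w i ^ p) = N #> \<iota> w"
proof -
  let ?w = "SOME v. v \<in> T \<and> (\<lambda>i. v i ^ p) = (\<lambda>i. w i ^ p)"
  have "?w \<in> T \<and> (\<lambda>i. ?w i ^ p) = (\<lambda>i. w i ^ p)"
    by (rule someI [where x = w]) (simp add: assms)
  then show ?thesis
    using assms by (simp add: quotient_inclusion_def rcos_iota_eq_iff)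
qed

lemma image_quotient_inclusion: "quotient_inclusion ` T = (\<lambda>w. N #> \<iota> w) ` T"
proof -
  have "quotient_inclusion ` T = quotient_inclusion ` (\<lambda>w i. w i ^ p) ` T"
    by (simp only: torus_pow_image [OF p_pos])
  also have "\<dots> = (\<lambda>w. N #> \<iota> w) ` T"
    unfolding image_image by (rule image_cong) (simp_all add: quotient_inclusion_pow)
  finally show ?thesis .
qed

lemma quotient_projection_rcos:
  assumes "x \<in> carrier G"
  shows "quotient_projection (N #> x) = \<pi> x"
proof -
  have "\<pi> x \<in> {0..<int p}"
    using pi.hom_closed [OF assms] p_pos by (simp add: carrier_integer_mod_group)
  then have "\<pi> (y \<otimes> x) = \<pi> x" if "y \<in> N" for y
    using that assms pi.hom_mult [of y x] by (auto simp: torsion_part_def pi_image_iota_eq_0)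
  then have "\<pi> ` (N #> x) = {\<pi> x}"
    using rcos_self [OF assms N_subgroup] by (auto simp: r_coset_def)
  then show ?thesis
    by (simp add: quotient_projection_def)
qed

lemma quotient_projection_hom: "quotient_projection \<in> hom (G Mod N) (integer_mod_group p)"
proof -
  have "N \<subseteq> kernel G (integer_mod_group p) \<pi>"
    by (auto simp: kernel_pi torsion_part_def)
  then obtain f where f: "f \<in> hom (G Mod N) (integer_mod_group p)"
    and f_rcos: "\<And>x. x \<in> carrier G \<Longrightarrow> f (N #> x) = \<pi> x"
    using pi.FactGroup_universal_kernel [OF N_normal] by blast
  have "f S = quotient_projection S" if "S \<in> carrier (G Mod N)" for S
    using that by (auto simp: carrier_FactGroup f_rcos quotient_projection_rcos)
  then show ?thesis
    by (rule group.hom_restrict [OF group_quotient f])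
qed

lemma quotient_inclusion_hom: "quotient_inclusion \<in> hom (torus_group n) (G Mod N)"
proof (rule homI)
  fix z assume "z \<in> T"
  then obtain w where "w \<in> T" "z = (\<lambda>i. w i ^ p)"
    by (rule torus_pow_surjective [OF p_pos])
  then show "quotient_inclusion z \<in> carrier (G Mod N)"
    by (simp add: quotient_inclusion_pow carrier_FactGroup)
next
  fix z z' assume z: "z \<in> T" and z': "z' \<in> T"
  obtain w where w: "w \<in> T" "z = (\<lambda>i. w i ^ p)"
    using z by (rule torus_pow_surjective [OF p_pos])
  obtain w' where w': "w' \<in> T" "z' = (\<lambda>i. w' i ^ p)"
    using z' by (rule torus_pow_surjective [OF p_pos])
  have ww': "w \<otimes>\<^bsub>torus_group n\<^esub> w' \<in> T"
    using w(1) w'(1) by (simp add: mult_torus_group carrier_torus_group norm_mult)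
  have "z \<otimes>\<^bsub>torus_group n\<^esub> z' = (\<lambda>i. (w \<otimes>\<^bsub>torus_group n\<^esub> w') i ^ p)"
    unfolding w(2) w'(2) mult_torus_group by (simp add: power_mult_distrib)
  then have "quotient_inclusion (z \<otimes>\<^bsub>torus_group n\<^esub> z') = N #> (\<iota> w \<otimes> \<iota> w')"
    using ww' w(1) w'(1) by (simp add: quotient_inclusion_pow)
  also have "\<dots> = quotient_inclusion z \<otimes>\<^bsub>G Mod N\<^esub> quotient_inclusion z'"
    using w w' by (simp add: quotient_inclusion_pow normal.rcos_sum [OF N_normal])
  finally show "quotient_inclusion (z \<otimes>\<^bsub>torus_group n\<^esub> z') =
      quotient_inclusion z \<otimes>\<^bsub>G Mod N\<^esub> quotient_inclusion z'" .
qed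

lemma quotient_inclusion_inj: "inj_on quotient_inclusion T"
proof (rule inj_onI)
  fix z z' assume z: "z \<in> T" and z': "z' \<in> T"
    and eq: "quotient_inclusion z = quotient_inclusion z'"
  obtain w where w: "w \<in> T" "z = (\<lambda>i. w i ^ p)"
    using z by (rule torus_pow_surjective [OF p_pos])
  obtain w' where w': "w' \<in> T" "z' = (\<lambda>i. w' i ^ p)"
    using z' by (rule torus_pow_surjective [OF p_pos])
  show "z = z'"
    using eq w w' by (simp add: quotient_inclusion_pow rcos_iota_eq_iff)
qed

text \<open>Precomposed with the quotient map \<open>z \<mapsto> z\<^sup>p\<close> of the compact torus,
  \<open>quotient_inclusion\<close> becomes the continuous map \<open>z \<mapsto> N \<iota>(z)\<close>.\<close>
lemma quotient_inclusion_continuous: "continuous_map (torus_topology n) Q quotient_inclusion"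
proof -
  have "continuous_map (torus_topology n) Q ((\<lambda>x. N #> x) \<circ> \<iota>)"
    using iota_continuous quotient_imp_continuous_map [OF quotient_map_Q]
    by (rule continuous_map_compose)
  then have "continuous_map (torus_topology n) Q (quotient_inclusion \<circ> (\<lambda>w i. w i ^ p))"
    by (rule continuous_map_eq) (simp add: quotient_inclusion_pow)
  then show ?thesis
    by (rule continuous_compose_quotient_map [OF quotient_map_torus_pow [OF p_pos]])
qed

lemma quotient_projection_continuous:
  "continuous_map Q (cyclic_topology p) quotient_projection"
proof (rule continuous_compose_quotient_map [OF quotient_map_Q])
  show "continuous_map X (cyclic_topology p) (quotient_projection \<circ> (\<lambda>x. N #> x))"
    using pi_continuous by (rule continuous_map_eq) (simp add: topspace_X quotient_projection_rcos)
qed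

lemma kernel_quotient_projection:
  "kernel (G Mod N) (integer_mod_group p) quotient_projection = quotient_inclusion ` T"
proof -
  have "kernel (G Mod N) (integer_mod_group p) quotient_projection
      = (\<lambda>x. N #> x) ` kernel G (integer_mod_group p) \<pi>"
    by (auto simp: kernel_def carrier_FactGroup quotient_projection_rcos)
  also have "\<dots> = (\<lambda>x. N #> x) ` \<iota> ` T"
    by (simp only: kernel_pi)
  also have "\<dots> = quotient_inclusion ` T"
    by (simp add: image_quotient_inclusion image_image)
  finally show ?thesis .
qed

lemma torus_extension_quotient:
  "torus_extension (G Mod N) Q n p quotient_inclusion quotient_projection"
proof -
  have "quotient_projection ` carrier (G Mod N) = \<pi> ` carrier G"
    unfolding carrier_FactGroup image_image
    by (rule image_cong) (simp_all add: quotient_projection_rcos)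
  then have "quotient_projection ` carrier (G Mod N) = carrier (integer_mod_group p)"
    by (simp only: pi_surjective)
  then show ?thesis
    unfolding torus_extension_def
    by (intro conjI quotient_inclusion_hom quotient_inclusion_inj quotient_inclusion_continuous
          quotient_projection_hom quotient_projection_continuous kernel_quotient_projection)
qed

lemma split_torus_extension_quotient: "split_torus_extension (G Mod N) Q n p"
proof -
  obtain h where h: "h \<in> carrier G" "\<pi> h = 1" "h [^] p \<in> N"
    by (rule exists_splitting_element)
  interpret GN: group "G Mod N"
    by (rule group_quotient)
  interpret q: group_hom G "G Mod N" "\<lambda>x. N #> x"
    using normal.r_coset_hom_Mod [OF N_normal]
    by (simp add: group_hom_def group_hom_axioms_def is_group GN.is_group)
  define s where "s c = (N #> h) [^]\<^bsub>G Mod N\<^esub> nat c" for c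
  have s_rcos: "s c = N #> h [^] nat c" for c
    using h by (simp add: s_def q.hom_nat_pow)
  have "(N #> h) [^]\<^bsub>G Mod N\<^esub> p = \<one>\<^bsub>G Mod N\<^esub>"
    using h by (simp add: q.hom_nat_pow [symmetric] coset_join2 N_subgroup)
  then have s_hom: "s \<in> hom (integer_mod_group p) (G Mod N)"
    unfolding s_def using p_pos h
    by (intro GN.pow_hom_integer_mod_group) (simp_all add: carrier_FactGroup)
  moreover have "continuous_map (cyclic_topology p) Q s"
    using s_hom by (simp add: cyclic_topology_def topspace_Q hom_def)
  moreover have "\<forall>c \<in> carrier (integer_mod_group p). quotient_projection (s c) = c"
  proof
    fix c assume "c \<in> carrier (integer_mod_group p)"
    then have "0 \<le> c" "c < int p"
      using p_pos by (auto simp: carrier_integer_mod_group)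
    then have "\<pi> (h [^] nat c) = c"
      unfolding pi.hom_nat_pow [OF h(1)] using h(2) by simp
    then show "quotient_projection (s c) = c"
      using h(1) by (simp add: s_rcos quotient_projection_rcos)
  qed
  ultimately show ?thesis
    unfolding split_torus_extension_def using torus_extension_quotient by blast
qed

end

theorem lemma2p4:
  fixes G :: "('g, 'm) monoid_scheme" and X :: "'g topology"
    and p n :: nat and \<iota> :: "(nat \<Rightarrow> complex) \<Rightarrow> 'g" and \<pi> :: "'g \<Rightarrow> int"
  assumes "prime p" and "n \<ge> 1"
    and "topological_group G X" and "compact_space X" and "Hausdorff_space X"
    and "torus_extension G X n p \<iota> \<pi>"
  shows "\<exists>N l. N \<lhd> G \<and> closedin X N \<and> 1 \<le> l \<and> l \<le> n
           \<and> split_torus_extension (G Mod N) (quotient_group_topology G X N) l p"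
proof -
  interpret torus_extension_setting G X p n \<iota> \<pi>
    using assms by (simp add: torus_extension_setting_def)
  show ?thesis
    using N_normal N_closed split_torus_extension_quotient \<open>n \<ge> 1\<close> by blast
qed

end
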